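(* Let $\mathcal{M}\subseteq 2^N$ be a matroid on $N=[n]$. Let the elements have distinct nonnegative weights with $w(\{1\})>\dots>w(\{n\})$. Let $k$ satisfy the standing assumptions below, and let $p\in[\varepsilon(k),1/2]$. Let $X_1,\dots,X_n\sim\mathrm{Ber}(2p)$ and $Y_1,\dots,Y_n\sim\mathrm{Ber}(1/2)$ be mutually independent. Set $S=\{i:X_i=1,Y_i=1\}$ and $S^+=S\cap\mathrm{OPT}(N,\mathcal{M}^k)$. Then \[ \Pr\bigl[\varphi(S^+,\mathcal{M})\ge(1+\varepsilon(pk))pk\bigr]\le 1/n^3 . \]
   Context: Matroids are identified with their families of independent sets. $\mathcal{M}^k$ is the $k$-fold union of $\mathcal{M}$: the family of sets partitionable into $k$ members of $\mathcal{M}$. $\mathrm{OPT}(N,\mathcal{M}^k)$ is the maximum-weight set in $\mathcal{M}^k$, where the weight of a set is the sum of its elements' weights; it is unique since weights are distinct. The covering number $\varphi(S,\mathcal{M})$ is the least $r\in\mathbb{N}$ such that $S$ can be partitioned into $r$ members of $\mathcal{M}$. Standing assumptions: $\varepsilon(x)=C\sqrt{\log(n)/x}$, where $C$ is a sufficiently large absolute constant (e.g. $C\in[10,20]$, such that $\log(1/\varepsilon(k))-2$ is a positive integer), and $160^2\log n\le k\le n$. *)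

theory Defs
  imports "HOL-Probability.Probability"
begin

text \<open>A matroid on the ground set N, identified with its family of independent sets.\<close>
definition matroid :: "'a set \<Rightarrow> 'a set set \<Rightarrow> bool" where
  "matroid N M \<longleftrightarrow>
     (\<forall>I\<in>M. I \<subseteq> N) \<and> {} \<in> M \<and>
     (\<forall>I J. J \<in> M \<longrightarrow> I \<subseteq> J \<longrightarrow> I \<in> M) \<and>
     (\<forall>I\<in>M. \<forall>J\<in>M. card I < card J \<longrightarrow> (\<exists>x\<in>J - I. insert x I \<in> M))"

definition partitionable :: "'a set set \<Rightarrow> nat \<Rightarrow> 'a set \<Rightarrow> bool" where
  "partitionable M r S \<longleftrightarrow>
     (\<exists>P :: nat \<Rightarrow> 'a set. (\<forall>i<r. P i \<in> M) \<and>
        (\<forall>i<r. \<forall>j<r. i \<noteq> j \<longrightarrow> P i \<inter> P j = {}) \<and>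
        (\<Union>i<r. P i) = S)"

definition kunion :: "'a set set \<Rightarrow> nat \<Rightarrow> 'a set set" where
  "kunion M k = {S. partitionable M k S}"

definition set_weight :: "('a \<Rightarrow> real) \<Rightarrow> 'a set \<Rightarrow> real" where
  "set_weight w S = (\<Sum>x\<in>S. w x)"

text \<open>OPT(N, F): the maximum-weight set of F; among maximum-weight sets we take the
  inclusion-maximal one (this only matters if some weight is 0).\<close>
definition OPT :: "('a \<Rightarrow> real) \<Rightarrow> 'a set set \<Rightarrow> 'a set" where
  "OPT w F = (THE S. S \<in> F \<and> (\<forall>T\<in>F. set_weight w T \<le> set_weight w S) \<and>
                    (\<forall>T\<in>F. S \<subseteq> T \<longrightarrow> T = S))"

definition covering_number :: "'a set \<Rightarrow> 'a set set \<Rightarrow> nat" where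
  "covering_number S M = (LEAST r. partitionable M r S)"

definition eps :: "real \<Rightarrow> nat \<Rightarrow> real \<Rightarrow> real" where
  "eps C n x = C * sqrt (ln (real n) / x)"

end

theory Submission
  imports Defs "HOL-Analysis.Harmonic_Numbers"
begin

(* If the covering number of S+ exceeds r, the augmenting-path proof of Edmonds' matroid
   partition theorem yields a nonempty independent set J whose span contains more than r |J|
   elements of S+.  Since S+ lies in OPT, a member of the k-fold union, the span of J contains
   at most k |J| elements of OPT, each of which lands in S independently with probability p.
   A Chernoff bound with exponent eps(pk)/2 bounds the probability of this event by
   n^(-6 |J|), and the union bound over all nonempty J gives (1 + n^-6)^n - 1 <= n^-3. *)

section \<open>Matroids\<close>

lemma matroid_subset: "matroid N M \<Longrightarrow> J \<in> M \<Longrightarrow> I \<subseteq> J \<Longrightarrow> I \<in> M"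
  unfolding matroid_def by blast

lemma matroid_empty: "matroid N M \<Longrightarrow> {} \<in> M"
  unfolding matroid_def by blast

lemma matroid_subset_ground: "matroid N M \<Longrightarrow> I \<in> M \<Longrightarrow> I \<subseteq> N"
  unfolding matroid_def by blast

lemma matroid_finite: "matroid N M \<Longrightarrow> finite N \<Longrightarrow> I \<in> M \<Longrightarrow> finite I"
  by (meson matroid_subset_ground finite_subset)

lemma matroid_augment:
  "matroid N M \<Longrightarrow> I \<in> M \<Longrightarrow> J \<in> M \<Longrightarrow> card I < card J \<Longrightarrow> \<exists>x\<in>J - I. insert x I \<in> M"
  unfolding matroid_def by blast

lemma matroid_extend:
  assumes mat: "matroid N M" and fin: "finite N"
  shows "A \<in> M \<Longrightarrow> Q \<in> M \<Longrightarrow> card A \<le> card Q \<Longrightarrow>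
    \<exists>B\<in>M. A \<subseteq> B \<and> B \<subseteq> A \<union> Q \<and> card B = card Q"
proof (induction "card Q - card A" arbitrary: A)
  case 0
  then show ?case by auto
next
  case (Suc d)
  then obtain x where x: "x \<in> Q - A" "insert x A \<in> M"
    using matroid_augment[OF mat] by (metis zero_less_Suc zero_less_diff)
  have "card (insert x A) = Suc (card A)"
    using x matroid_finite[OF mat fin Suc.prems(1)] by simp
  then obtain B where "B \<in> M" "insert x A \<subseteq> B" "B \<subseteq> insert x A \<union> Q" "card B = card Q"
    using Suc.hyps(1)[of "insert x A"] Suc.hyps(2) Suc.prems x by force
  then show ?case using x by (intro bexI[of _ B]) auto
qed

lemma matroid_exchange:
  assumes mat: "matroid N M" and fin: "finite N"
    and A: "A \<in> M" "z \<in> A" "A \<subseteq> insert z Q" "card A \<le> card Q"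
    and Q: "Q \<in> M" "z \<notin> Q"
  shows "\<exists>f\<in>Q - A. insert z (Q - {f}) \<in> M"
proof -
  obtain B where B: "B \<in> M" "A \<subseteq> B" "B \<subseteq> insert z Q" "card B = card Q"
    using matroid_extend[OF mat fin A(1) Q(1) A(4)] A(3) by blast
  have fQ: "finite Q" using matroid_finite[OF mat fin Q(1)] .
  have "B \<noteq> insert z Q" using B(4) fQ Q(2) by auto
  then obtain f where f: "f \<in> insert z Q" "f \<notin> B" using B(3) by blast
  then have fQA: "f \<in> Q" "f \<notin> A" using A(2) B(2) by auto
  have "B \<subseteq> insert z (Q - {f})" using B(3) f(2) by auto
  moreover have "card (insert z (Q - {f})) = card B"
    using fQ fQA Q(2) B(4) card_Suc_Diff1[OF fQ fQA(1)] by simp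
  ultimately have "B = insert z (Q - {f})" using fQ by (intro card_subset_eq) auto
  then show ?thesis using B(1) fQA by blast
qed

lemma matroid_augment_after_exchange:
  assumes mat: "matroid N M" and fin: "finite N" and P: "P \<in> M"
    and y: "y \<notin> P" "insert y P \<notin> M" and b: "b \<in> P" "insert y (P - {b}) \<in> M"
    and a: "a \<notin> P" "insert a P \<in> M" "a \<noteq> y"
  shows "insert a (insert y (P - {b})) \<in> M"
proof -
  have fP: "finite P" using matroid_finite[OF mat fin P] .
  have "card (insert y (P - {b})) < card (insert a P)"
    using fP a b y card_Suc_Diff1[OF fP b(1)] by simp
  then obtain z where z: "z \<in> insert a P - insert y (P - {b})" "insert z (insert y (P - {b})) \<in> M"
    using matroid_augment[OF mat b(2) a(2)] by blast
  have "z = a \<or> z = b" using z(1) by auto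
  moreover have "insert b (insert y (P - {b})) = insert y P" using b by auto
  ultimately show ?thesis using z(2) y(2) by auto
qed

definition indep_span :: "'a set set \<Rightarrow> 'a set \<Rightarrow> 'a set" where
  "indep_span M J = {z. z \<in> J \<or> insert z J \<notin> M}"

lemma card_le_if_subset_indep_span:
  assumes mat: "matroid N M" and J: "J \<in> M" and I: "I \<in> M" "I \<subseteq> indep_span M J"
  shows "card I \<le> card J"
proof (rule ccontr)
  assume "\<not> ?thesis"
  then obtain x where "x \<in> I - J" "insert x J \<in> M" using matroid_augment[OF mat J I(1)] by auto
  then show False using I(2) unfolding indep_span_def by auto
qed

section \<open>Partitions into independent sets\<close>

definition indep_partition :: "'a set set \<Rightarrow> nat \<Rightarrow> (nat \<Rightarrow> 'a set) \<Rightarrow> 'a set \<Rightarrow> bool" where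
  "indep_partition M r P S \<longleftrightarrow> (\<forall>i<r. P i \<in> M) \<and>
     (\<forall>i<r. \<forall>j<r. i \<noteq> j \<longrightarrow> P i \<inter> P j = {}) \<and> (\<Union>i<r. P i) = S"

lemma partitionable_iff_indep_partition: "partitionable M r S \<longleftrightarrow> (\<exists>P. indep_partition M r P S)"
  unfolding partitionable_def indep_partition_def by blast

lemma partitionable_empty: "matroid N M \<Longrightarrow> partitionable M r {}"
  unfolding partitionable_def by (rule exI[of _ "\<lambda>_. {}"]) (simp add: matroid_empty)

lemma indep_partition_finite:
  "matroid N M \<Longrightarrow> finite N \<Longrightarrow> indep_partition M r P S \<Longrightarrow> finite S"
  unfolding indep_partition_def using matroid_finite by blast

lemma card_inter_indep_partition_le:
  assumes "indep_partition M r P S"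
  shows "card (S \<inter> T) \<le> (\<Sum>j<r. card (P j \<inter> T))"
proof -
  have "S \<inter> T = (\<Union>j<r. P j \<inter> T)" using assms unfolding indep_partition_def by auto
  then show ?thesis using card_UN_le[of "{..<r}" "\<lambda>j. P j \<inter> T"] by simp
qed

lemma card_inter_indep_partition:
  assumes mat: "matroid N M" and fin: "finite N" and P: "indep_partition M r P S"
  shows "card (S \<inter> T) = (\<Sum>j<r. card (P j \<inter> T))"
proof -
  have "S \<inter> T = (\<Union>j<r. P j \<inter> T)" using P unfolding indep_partition_def by auto
  moreover have "card (\<Union>j<r. P j \<inter> T) = (\<Sum>j<r. card (P j \<inter> T))"
    using P matroid_finite[OF mat fin] unfolding indep_partition_def
    by (intro card_UN_disjoint) (auto, blast)
  ultimately show ?thesis by simp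
qed

lemma indep_partition_mem: "indep_partition M r P S \<Longrightarrow> j < r \<Longrightarrow> P j \<in> M"
  by (simp add: indep_partition_def)

lemma indep_partition_inter_mem:
  assumes "matroid N M" "indep_partition M r P S" "j < r"
  shows "P j \<inter> T \<in> M"
  by (rule matroid_subset[OF assms(1) indep_partition_mem[OF assms(2,3)]]) (rule Int_lower1)

lemma mem_kunion_iff: "B \<in> kunion M k \<longleftrightarrow> (\<exists>P. indep_partition M k P B)"
  unfolding kunion_def partitionable_iff_indep_partition by simp

lemma indep_partition_move:
  assumes mat: "matroid N M" and P: "indep_partition M r P S"
    and z: "jz < r" "z \<in> P jz" and js: "js < r" "z \<notin> P js" "insert z (P js) \<in> M"
  shows "indep_partition M r (P(jz := P jz - {z}, js := insert z (P js))) S"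
    (is "indep_partition M r ?P' S")
  unfolding indep_partition_def
proof (intro conjI allI impI)
  fix i assume "i < r"
  then show "?P' i \<in> M" using indep_partition_mem[OF P] js
    by (auto intro: matroid_subset[OF mat])
next
  fix i j assume ij: "i < r" "j < r" "i \<noteq> j"
  have disj: "i \<noteq> j \<Longrightarrow> P i \<inter> P j = {}" if "i < r" "j < r" for i j
    using P that unfolding indep_partition_def by auto
  have z_only: "i = jz" if "i < r" "z \<in> P i" for i
    using disj[OF that(1) z(1)] that(2) z(2) by blast
  show "?P' i \<inter> ?P' j = {}"
    using disj[OF ij] z_only[OF ij(1)] z_only[OF ij(2)] ij by auto
next
  show "(\<Union>i<r. ?P' i) = S"
    using P js z unfolding indep_partition_def by (auto split: if_splits)
qed

definition exchange_edge :: "'a set set \<Rightarrow> nat \<Rightarrow> (nat \<Rightarrow> 'a set) \<Rightarrow> 'a \<Rightarrow> 'a \<Rightarrow> bool" where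
  "exchange_edge M r P y z \<longleftrightarrow> (\<exists>j<r. z \<in> P j \<and> y \<notin> P j \<and> insert y (P j - {z}) \<in> M)"

definition augmentable :: "'a set set \<Rightarrow> nat \<Rightarrow> (nat \<Rightarrow> 'a set) \<Rightarrow> 'a \<Rightarrow> bool" where
  "augmentable M r P y \<longleftrightarrow> (\<exists>j<r. y \<notin> P j \<and> insert y (P j) \<in> M)"

lemma partitionable_insert_if_augmentable:
  assumes P: "indep_partition M r P S" and x: "x \<notin> S" "augmentable M r P x"
  shows "partitionable M r (insert x S)"
proof -
  obtain j where j: "j < r" "x \<notin> P j" "insert x (P j) \<in> M"
    using x(2) unfolding augmentable_def by blast
  have "indep_partition M r (P(j := insert x (P j))) (insert x S)"
    using P x(1) j unfolding indep_partition_def by (auto split: if_splits)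
  then show ?thesis unfolding partitionable_iff_indep_partition by blast
qed

text \<open>P' moves z into a part that accepts it and lets y take the place of z.\<close>

lemma augmentable_exchange:
  assumes mat: "matroid N M" and fin: "finite N" and P: "indep_partition M r P S"
    and edge: "exchange_edge M r P y z" and aug: "augmentable M r P z"
  obtains P' where "indep_partition M r P' S" "augmentable M r P' y"
    "\<And>u v. exchange_edge M r P u v \<Longrightarrow> \<not> augmentable M r P u \<Longrightarrow> v \<noteq> z \<Longrightarrow>
       exchange_edge M r P' u v"
proof -
  obtain js where js: "js < r" "z \<notin> P js" "insert z (P js) \<in> M"
    using aug unfolding augmentable_def by blast
  obtain jz where jz: "jz < r" "z \<in> P jz" "y \<notin> P jz" "insert y (P jz - {z}) \<in> M"
    using edge unfolding exchange_edge_def by blast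
  have jne: "jz \<noteq> js" using js jz by auto
  define P' where "P' = P(jz := P jz - {z}, js := insert z (P js))"
  have "indep_partition M r P' S" unfolding P'_def using indep_partition_move[OF mat P jz(1,2) js] .
  moreover have "augmentable M r P' y"
    unfolding augmentable_def P'_def using jz jne by (intro exI[of _ jz]) auto
  moreover have "exchange_edge M r P' u v"
    if uv: "exchange_edge M r P u v" "\<not> augmentable M r P u" "v \<noteq> z" for u v
  proof -
    obtain j where j: "j < r" "v \<in> P j" "u \<notin> P j" "insert u (P j - {v}) \<in> M"
      using uv(1) unfolding exchange_edge_def by blast
    have uz: "u \<noteq> z" using uv(2) aug by auto
    have u_rejected: "insert u (P j) \<notin> M" using uv(2) j unfolding augmentable_def by auto
    have "insert u (P' j - {v}) \<in> M"
    proof (cases "j = js")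
      case True
      have "insert z (insert u (P j - {v})) \<in> M"
        using matroid_augment_after_exchange[OF mat fin indep_partition_mem[OF P j(1)] j(3)
          u_rejected j(2,4)] js uz True by auto
      moreover have "insert u (P' j - {v}) = insert z (insert u (P j - {v}))"
        using True uv(3) unfolding P'_def by auto
      ultimately show ?thesis by simp
    next
      case False
      then show ?thesis using j(4) unfolding P'_def by (auto intro: matroid_subset[OF mat])
    qed
    then show ?thesis
      unfolding exchange_edge_def P'_def using j uz uv(3) by (intro exI[of _ j]) auto
  qed
  ultimately show ?thesis using that by blast
qed

lemma partitionable_insert_if_augmenting_path:
  assumes mat: "matroid N M" and fin: "finite N"
  shows "indep_partition M r P S \<Longrightarrow> x \<notin> S \<Longrightarrow> ys 0 = x \<Longrightarrow>
    (\<forall>i<m. exchange_edge M r P (ys i) (ys (Suc i))) \<Longrightarrow> augmentable M r P (ys m) \<Longrightarrow>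
    partitionable M r (insert x S)"
proof (induction m arbitrary: P rule: less_induct)
  case (less m)
  show ?case
  proof (cases "\<exists>i<m. augmentable M r P (ys i)")
    case True
    then obtain i where "i < m" "augmentable M r P (ys i)" by blast
    then show ?thesis using less by auto
  next
    case no_earlier: False
    show ?thesis
    proof (cases m)
      case 0
      then show ?thesis using less partitionable_insert_if_augmentable by auto
    next
      case (Suc m')
      obtain P' where P': "indep_partition M r P' S" "augmentable M r P' (ys m')"
        and kept: "\<And>u v. exchange_edge M r P u v \<Longrightarrow> \<not> augmentable M r P u \<Longrightarrow> v \<noteq> ys m \<Longrightarrow>
           exchange_edge M r P' u v"
        using augmentable_exchange[OF mat fin less.prems(1), of "ys m'" "ys m"] less.prems Suc
        by auto
      have "ys (Suc i) \<noteq> ys m" if "i < m'" for i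
        using no_earlier less.prems(5) that Suc by (metis Suc_mono)
      then have "\<forall>i<m'. exchange_edge M r P' (ys i) (ys (Suc i))"
        using kept less.prems(4) no_earlier Suc by auto
      then show ?thesis using less.IH[of m' P'] Suc P' less.prems(2,3) by auto
    qed
  qed
qed

definition exchange_reach :: "'a set set \<Rightarrow> nat \<Rightarrow> (nat \<Rightarrow> 'a set) \<Rightarrow> 'a set \<Rightarrow> 'a set" where
  "exchange_reach M r P X = {z. \<exists>x\<in>X. \<exists>m ys. ys 0 = x \<and>
     (\<forall>i<m. exchange_edge M r P (ys i) (ys (Suc i))) \<and> ys m = z}"

lemma subset_exchange_reach: "X \<subseteq> exchange_reach M r P X"
  unfolding exchange_reach_def by (force intro: exI[of _ 0])

lemma exchange_reach_subset:
  assumes "indep_partition M r P S"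
  shows "exchange_reach M r P X \<subseteq> X \<union> S"
proof
  fix z assume "z \<in> exchange_reach M r P X"
  then obtain x m ys where x: "x \<in> X" "ys 0 = x" "ys m = z"
    "\<forall>i<m. exchange_edge M r P (ys i) (ys (Suc i))"
    unfolding exchange_reach_def by blast
  show "z \<in> X \<union> S"
  proof (cases m)
    case (Suc m')
    then have "exchange_edge M r P (ys m') z" using x by auto
    then show ?thesis using assms unfolding exchange_edge_def indep_partition_def by auto
  qed (use x in auto)
qed

lemma exchange_reach_step:
  assumes "z \<in> exchange_reach M r P X" "exchange_edge M r P z w"
  shows "w \<in> exchange_reach M r P X"
proof -
  obtain x m ys where x: "x \<in> X" "ys 0 = x" "ys m = z"
    "\<forall>i<m. exchange_edge M r P (ys i) (ys (Suc i))"
    using assms(1) unfolding exchange_reach_def by blast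
  have "(ys(Suc m := w)) 0 = x" "(ys(Suc m := w)) (Suc m) = w"
    "\<forall>i<Suc m. exchange_edge M r P ((ys(Suc m := w)) i) ((ys(Suc m := w)) (Suc i))"
    using x assms(2) by (auto simp: less_Suc_eq)
  then show ?thesis unfolding exchange_reach_def using x(1) by blast
qed

lemma exchange_reach_not_augmentable:
  assumes mat: "matroid N M" and fin: "finite N" and P: "indep_partition M r P S"
    and X: "X \<inter> S = {}" "\<forall>x\<in>X. \<not> partitionable M r (insert x S)"
    and z: "z \<in> exchange_reach M r P X"
  shows "\<not> augmentable M r P z"
proof
  assume "augmentable M r P z"
  moreover obtain x m ys where "x \<in> X" "ys 0 = x" "ys m = z"
    "\<forall>i<m. exchange_edge M r P (ys i) (ys (Suc i))"
    using z unfolding exchange_reach_def by blast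
  ultimately show False
    using partitionable_insert_if_augmenting_path[OF mat fin P] X by blast
qed

text \<open>An unspanned z would, by the exchange property, have an edge to an element of P j
  outside the reachable set.\<close>

lemma exchange_reach_subset_indep_span:
  assumes mat: "matroid N M" and fin: "finite N" and P: "indep_partition M r P S"
    and X: "X \<inter> S = {}" "\<forall>x\<in>X. \<not> partitionable M r (insert x S)" and j: "j < r"
  shows "exchange_reach M r P X \<subseteq> indep_span M (P j \<inter> exchange_reach M r P X)"
    (is "?T \<subseteq> _")
proof
  fix z assume z: "z \<in> ?T"
  show "z \<in> indep_span M (P j \<inter> ?T)"
  proof (rule ccontr)
    assume "\<not> ?thesis"
    then have zP: "z \<notin> P j" and A: "insert z (P j \<inter> ?T) \<in> M"
      using z unfolding indep_span_def by auto
    have PjM: "P j \<in> M" using P j unfolding indep_partition_def by auto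
    have fPj: "finite (P j)" using matroid_finite[OF mat fin PjM] .
    have "insert z (P j) \<notin> M"
      using exchange_reach_not_augmentable[OF mat fin P X z] zP j unfolding augmentable_def by auto
    then have "\<not> P j \<subseteq> ?T" using A by (metis inf.absorb1)
    then have "card (P j \<inter> ?T) < card (P j)"
      using fPj by (meson Int_lower1 inf.absorb_iff1 psubsetI psubset_card_mono)
    then have "card (insert z (P j \<inter> ?T)) \<le> card (P j)" using fPj zP by simp
    then obtain f where f: "f \<in> P j" "f \<notin> ?T" "insert z (P j - {f}) \<in> M"
      using matroid_exchange[OF mat fin A _ _ _ PjM zP] by auto
    then have "exchange_edge M r P z f" unfolding exchange_edge_def using j zP by auto
    then show False using exchange_reach_step[OF z] f(2) by blast
  qed
qed

lemma exists_partitionable_not_extendable: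
  assumes mat: "matroid N M" and fS: "finite S" and np: "\<not> partitionable M r S"
  obtains I x where "I \<subseteq> S" "partitionable M r I" "x \<in> S - I" "\<not> partitionable M r (insert x I)"
proof -
  define F where "F = {I. I \<subseteq> S \<and> partitionable M r I}"
  have "{} \<in> F" unfolding F_def using partitionable_empty[OF mat] by blast
  then have ne: "card ` F \<noteq> {}" by blast
  have fF: "finite F" unfolding F_def using fS by auto
  obtain I where IF: "I \<in> F" "card I = Max (card ` F)"
    using Max_in[OF finite_imageI[OF fF] ne] by auto
  have IS: "I \<subseteq> S" using IF(1) unfolding F_def by auto
  have "I \<noteq> S" using IF(1) np unfolding F_def by auto
  then obtain x where x: "x \<in> S - I" using IS by blast
  have "\<not> partitionable M r (insert x I)"
  proof
    assume "partitionable M r (insert x I)"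
    then have "insert x I \<in> F" unfolding F_def using x IS by auto
    then have "card (insert x I) \<le> card I" unfolding IF(2) using fF by (intro Max_ge) auto
    moreover have "finite I" using IS fS by (rule finite_subset)
    ultimately show False using x by simp
  qed
  moreover have "partitionable M r I" using IF(1) unfolding F_def by blast
  ultimately show ?thesis using that IS x by blast
qed

text \<open>The witness J: take a partitionable I \<subseteq> S that cannot be extended by some x \<in> S, and
  restrict the first part of a partition of I to the set reachable from x.\<close>

lemma not_partitionable_imp_dense_indep_span:
  assumes mat: "matroid N M" and fin: "finite N" and SN: "S \<subseteq> N"
    and np: "\<not> partitionable M r S" and r: "1 \<le> r"
  shows "\<exists>J\<in>M. r * card J < card (S \<inter> indep_span M J)"
proof -
  have fS: "finite S" using SN fin finite_subset by auto
  obtain I x where IS: "I \<subseteq> S" and "partitionable M r I" and x: "x \<in> S - I"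
    and npx: "\<not> partitionable M r (insert x I)"
    using exists_partitionable_not_extendable[OF mat fS np] by blast
  then obtain P where P: "indep_partition M r P I"
    unfolding partitionable_iff_indep_partition by blast
  define T where "T = exchange_reach M r P {x}"
  define J where "J = P 0 \<inter> T"
  have JM: "J \<in> M" unfolding J_def using indep_partition_inter_mem[OF mat P] r by simp
  have span: "T \<subseteq> indep_span M (P j \<inter> T)" if "j < r" for j
    unfolding T_def using exchange_reach_subset_indep_span[OF mat fin P, of "{x}"] that x npx
    by auto
  have xT: "x \<in> T" unfolding T_def by (rule subsetD[OF subset_exchange_reach]) simp
  have TS: "T \<subseteq> S" using exchange_reach_subset[OF P] IS x unfolding T_def by blast
  have "card J \<le> card (P j \<inter> T)" if j: "j < r" for j
    by (rule card_le_if_subset_indep_span[OF mat indep_partition_inter_mem[OF mat P j] JM])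
      (use span[OF j] in \<open>auto simp: J_def\<close>)
  then have "r * card J \<le> (\<Sum>j<r. card (P j \<inter> T))"
    using sum_mono[of "{..<r}" "\<lambda>_. card J" "\<lambda>j. card (P j \<inter> T)"] by simp
  also have "\<dots> = card (I \<inter> T)" using card_inter_indep_partition[OF mat fin P] by simp
  also have "\<dots> < card (insert x (I \<inter> T))"
    using x finite_subset[OF IS fS] by simp
  also have "\<dots> \<le> card (S \<inter> indep_span M J)"
  proof (rule card_mono)
    have "T \<subseteq> indep_span M J" using span[of 0] r unfolding J_def by simp
    then show "insert x (I \<inter> T) \<subseteq> S \<inter> indep_span M J" using xT TS by blast
  qed (use fS in simp)
  finally show ?thesis using JM by blast
qed

lemma card_le_if_card_inter_le:
  assumes "finite A" "finite B" "B - A \<subseteq> T" "card (B \<inter> T) \<le> card (A \<inter> T)"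
  shows "card B \<le> card A"
proof -
  have "card (B - T) \<le> card (A - T)" using assms by (intro card_mono) auto
  then show ?thesis using assms card_Int_Diff[of A T] card_Int_Diff[of B T] by linarith
qed

text \<open>For augmentation, the set T reachable from I2 - I1 in the exchange graph of a partition
  of I1 satisfies |I2 \<inter> T| \<le> |I1 \<inter> T|, as P j \<inter> T spans T for every part P j.\<close>

theorem kunion_matroid:
  assumes mat: "matroid N M" and fin: "finite N"
  shows "matroid N (kunion M k)"
  unfolding matroid_def
proof (intro conjI ballI allI impI)
  fix I assume "I \<in> kunion M k"
  then show "I \<subseteq> N" using mat unfolding kunion_def partitionable_def matroid_def by blast
next
  show "{} \<in> kunion M k" unfolding kunion_def using partitionable_empty[OF mat] by blast
next
  fix I J assume "J \<in> kunion M k" "I \<subseteq> J"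
  then obtain P where P: "indep_partition M k P J" unfolding mem_kunion_iff by blast
  have "indep_partition M k (\<lambda>i. P i \<inter> I) I"
    using P \<open>I \<subseteq> J\<close> unfolding indep_partition_def by (auto intro: matroid_subset[OF mat]) blast
  then show "I \<in> kunion M k" unfolding mem_kunion_iff by blast
next
  fix I1 I2 assume I1: "I1 \<in> kunion M k" and I2: "I2 \<in> kunion M k" and c: "card I1 < card I2"
  show "\<exists>x\<in>I2 - I1. insert x I1 \<in> kunion M k"
  proof (rule ccontr)
    assume "\<not> ?thesis"
    then have np: "\<forall>x\<in>I2 - I1. \<not> partitionable M k (insert x I1)" unfolding kunion_def by auto
    obtain P where P: "indep_partition M k P I1" using I1 unfolding mem_kunion_iff by blast
    obtain Q where Q: "indep_partition M k Q I2" using I2 unfolding mem_kunion_iff by blast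
    define T where "T = exchange_reach M k P (I2 - I1)"
    have "card (Q j \<inter> T) \<le> card (P j \<inter> T)" if j: "j < k" for j
      by (rule card_le_if_subset_indep_span[OF mat indep_partition_inter_mem[OF mat P j]
            indep_partition_inter_mem[OF mat Q j]])
        (use exchange_reach_subset_indep_span[OF mat fin P _ np j] in \<open>auto simp: T_def\<close>)
    then have "card (I2 \<inter> T) \<le> card (I1 \<inter> T)"
      using card_inter_indep_partition_le[OF Q, of T] card_inter_indep_partition[OF mat fin P, of T]
        sum_mono[of "{..<k}" "\<lambda>j. card (Q j \<inter> T)" "\<lambda>j. card (P j \<inter> T)"] by simp
    moreover have "I2 - I1 \<subseteq> T" unfolding T_def by (rule subset_exchange_reach)
    ultimately have "card I2 \<le> card I1"
      using card_le_if_card_inter_le[OF indep_partition_finite[OF mat fin P]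
          indep_partition_finite[OF mat fin Q]] by blast
    then show False using c by simp
  qed
qed

lemma card_inter_indep_span_kunion:
  assumes mat: "matroid N M" and B: "B \<in> kunion M k" and J: "J \<in> M"
  shows "card (B \<inter> indep_span M J) \<le> k * card J"
proof -
  obtain Q where Q: "indep_partition M k Q B" using B unfolding mem_kunion_iff by blast
  have "card (Q j \<inter> indep_span M J) \<le> card J" if "j < k" for j
    by (rule card_le_if_subset_indep_span[OF mat J indep_partition_inter_mem[OF mat Q that]]) blast
  then have "(\<Sum>j<k. card (Q j \<inter> indep_span M J)) \<le> k * card J"
    using sum_mono[of "{..<k}" "\<lambda>j. card (Q j \<inter> indep_span M J)" "\<lambda>_. card J"] by simp
  then show ?thesis using card_inter_indep_partition_le[OF Q] by (meson le_trans)
qed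

lemma not_partitionable_below_covering_number:
  "r < covering_number S M \<Longrightarrow> \<not> partitionable M r S"
  unfolding covering_number_def using not_less_Least by blast

lemma dense_indep_span_if_covering_number_ge:
  assumes mat: "matroid N M" and fin: "finite N" and B: "B \<in> kunion M k" and SB: "S \<subseteq> B"
    and t: "2 \<le> t" "t \<le> real (covering_number S M)"
  shows "\<exists>J\<in>M - {{}}. (t - 1) * real (card J) \<le> real (card (S \<inter> indep_span M J))"
proof -
  define r where "r = covering_number S M - 1"
  have r: "1 \<le> r" "t - 1 \<le> real r" using t unfolding r_def by linarith+
  have BN: "B \<subseteq> N" using kunion_matroid[OF mat fin] B by (rule matroid_subset_ground)
  have "\<not> partitionable M r S"
    using r(1) by (intro not_partitionable_below_covering_number) (simp add: r_def)
  then obtain J where J: "J \<in> M" "r * card J < card (S \<inter> indep_span M J)"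
    using not_partitionable_imp_dense_indep_span[OF mat fin _ _ r(1)] SB BN by blast
  have "J \<noteq> {}"
  proof
    assume "J = {}"
    have "card (S \<inter> indep_span M J) \<le> card (B \<inter> indep_span M J)"
      using SB BN fin by (intro card_mono) (auto intro: finite_subset)
    also have "\<dots> = 0" using card_inter_indep_span_kunion[OF mat B J(1)] \<open>J = {}\<close> by simp
    finally show False using J(2) by simp
  qed
  moreover have "(t - 1) * real (card J) \<le> real (card (S \<inter> indep_span M J))"
  proof -
    have "(t - 1) * real (card J) \<le> real r * real (card J)"
      using r(2) by (intro mult_right_mono) auto
    also have "\<dots> \<le> real (card (S \<inter> indep_span M J))"
      using J(2) by (simp only: of_nat_mult[symmetric] of_nat_le_iff less_imp_le)
    finally show ?thesis .
  qed
  ultimately show ?thesis using J(1) by blast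
qed

section \<open>The maximum-weight set\<close>

definition is_OPT :: "('a \<Rightarrow> real) \<Rightarrow> 'a set set \<Rightarrow> 'a set \<Rightarrow> bool" where
  "is_OPT w F S \<longleftrightarrow> S \<in> F \<and> (\<forall>T\<in>F. set_weight w T \<le> set_weight w S) \<and> (\<forall>T\<in>F. S \<subseteq> T \<longrightarrow> T = S)"

lemma is_OPT_card_le:
  assumes mat: "matroid N F" and S1: "is_OPT w F S1" and S2: "is_OPT w F S2"
  shows "card S1 \<le> card S2"
proof (rule ccontr)
  assume "\<not> ?thesis"
  then obtain x where "x \<in> S1 - S2" "insert x S2 \<in> F"
    using matroid_augment[OF mat, of S2 S1] S1 S2 unfolding is_OPT_def by auto
  then show False using S2 unfolding is_OPT_def by auto
qed

lemma is_OPT_exchange_weight: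
  assumes mat: "matroid N F" and fin: "finite N"
    and S1: "is_OPT w F S1" and S2: "is_OPT w F S2" and e: "e \<in> S1 - S2"
  shows "\<exists>f\<in>S2 - S1. w e \<le> w f"
proof -
  have S1F: "S1 \<in> F" and S2F: "S2 \<in> F" using S1 S2 unfolding is_OPT_def by auto
  have fS1: "finite S1" and fS2: "finite S2" using matroid_finite[OF mat fin] S1F S2F by auto
  have "card (insert e (S1 \<inter> S2)) \<le> card S1" using fS1 e by (intro card_mono) auto
  then have "card (insert e (S1 \<inter> S2)) \<le> card S2" using is_OPT_card_le[OF mat S1 S2] by simp
  moreover have "insert e (S1 \<inter> S2) \<in> F" using e by (intro matroid_subset[OF mat S1F]) auto
  ultimately obtain f where f: "f \<in> S2 - insert e (S1 \<inter> S2)" "insert e (S2 - {f}) \<in> F"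
    using matroid_exchange[OF mat fin, of "insert e (S1 \<inter> S2)" e S2] S2F e by auto
  have "set_weight w (insert e (S2 - {f})) = set_weight w S2 + w e - w f"
    unfolding set_weight_def using fS2 e f(1) by (simp add: sum_diff1)
  moreover have "set_weight w (insert e (S2 - {f})) \<le> set_weight w S2"
    using S2 f(2) unfolding is_OPT_def by blast
  ultimately show ?thesis using f(1) by (intro bexI[of _ f]) auto
qed

lemma is_OPT_unique:
  assumes mat: "matroid N F" and fin: "finite N" and inj: "inj_on w N"
    and S1: "is_OPT w F S1" and S2: "is_OPT w F S2"
  shows "S1 = S2"
proof (rule ccontr)
  assume "S1 \<noteq> S2"
  define D where "D = (S1 - S2) \<union> (S2 - S1)"
  have S1F: "S1 \<in> F" and S2F: "S2 \<in> F" using S1 S2 unfolding is_OPT_def by auto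
  have DN: "D \<subseteq> N" using matroid_subset_ground[OF mat] S1F S2F unfolding D_def by blast
  have fD: "finite D" using DN fin finite_subset by auto
  have "w ` D \<noteq> {}" using \<open>S1 \<noteq> S2\<close> unfolding D_def by auto
  then have "Max (w ` D) \<in> w ` D" using fD by simp
  then obtain e where e: "e \<in> D" "w e = Max (w ` D)" by auto
  have emax: "w d \<le> w e" if "d \<in> D" for d unfolding e(2) using fD that by simp
  obtain f where f: "f \<in> D" "f \<noteq> e" "w e \<le> w f"
    using e(1) is_OPT_exchange_weight[OF mat fin S1 S2] is_OPT_exchange_weight[OF mat fin S2 S1]
    unfolding D_def by blast
  then have "w f = w e" using emax[OF f(1)] by simp
  then show False using inj_onD[OF inj _ ] DN e(1) f by blast
qed

lemma is_OPT_exists: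
  assumes mat: "matroid N F" and fin: "finite N" and nonneg: "\<forall>x\<in>N. 0 \<le> w x"
  shows "\<exists>S. is_OPT w F S"
proof -
  have FN: "F \<subseteq> Pow N" using matroid_subset_ground[OF mat] by blast
  have fF: "finite F" using FN fin by (meson finite_Pow_iff finite_subset)
  have "F \<noteq> {}" using matroid_empty[OF mat] by blast
  define W where "W = Max (set_weight w ` F)"
  define G where "G = {S\<in>F. set_weight w S = W}"
  have "W \<in> set_weight w ` F" unfolding W_def using fF \<open>F \<noteq> {}\<close> by (intro Max_in) auto
  then have neG: "card ` G \<noteq> {}" unfolding G_def by auto
  have fG: "finite G" using fF unfolding G_def by auto
  obtain S where S: "S \<in> G" "card S = Max (card ` G)"
    using Max_in[OF finite_imageI[OF fG] neG] by auto
  have Wmax: "set_weight w T \<le> W" if "T \<in> F" for T unfolding W_def using fF that by simp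
  have "is_OPT w F S"
    unfolding is_OPT_def
  proof (intro conjI ballI impI)
    show "S \<in> F" using S unfolding G_def by auto
    fix T assume T: "T \<in> F"
    show "set_weight w T \<le> set_weight w S" using S Wmax[OF T] unfolding G_def by auto
    assume ST: "S \<subseteq> T"
    have TN: "T \<subseteq> N" using T FN by auto
    have fT: "finite T" using TN fin finite_subset by auto
    have "set_weight w T = set_weight w S + set_weight w (T - S)"
      unfolding set_weight_def using sum.subset_diff[OF ST fT] by (simp add: add.commute)
    moreover have "set_weight w (T - S) \<ge> 0"
      unfolding set_weight_def using nonneg TN by (intro sum_nonneg) auto
    ultimately have "T \<in> G" using S Wmax[OF T] T unfolding G_def by auto
    then have "card T \<le> card S" unfolding S(2) using fG by (intro Max_ge) auto
    then show "T = S" using card_seteq[OF fT ST] by simp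
  qed
  then show ?thesis ..
qed

lemma OPT_mem:
  assumes mat: "matroid N F" and fin: "finite N" and inj: "inj_on w N" and nonneg: "\<forall>x\<in>N. 0 \<le> w x"
  shows "OPT w F \<in> F"
proof -
  have "OPT w F = (THE S. is_OPT w F S)" unfolding OPT_def is_OPT_def by simp
  moreover obtain S where S: "is_OPT w F S" using is_OPT_exists[OF mat fin nonneg] ..
  then have "is_OPT w F (THE S. is_OPT w F S)"
    by (rule theI) (use S is_OPT_unique[OF mat fin inj] in blast)
  ultimately show ?thesis unfolding is_OPT_def by simp
qed

section \<open>A Chernoff bound\<close>

lemma prob_pair_bernoulli_both:
  assumes "0 \<le> p" "p \<le> 1/2"
  shows "measure_pmf.prob (pair_pmf (bernoulli_pmf (2 * p)) (bernoulli_pmf (1/2)))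
    {v. fst v \<and> snd v} = p"
proof -
  have "{v. fst v \<and> snd v} = {(True, True)}" by auto
  then show ?thesis using assms by (simp add: measure_pmf_single pmf_pair)
qed

lemma expectation_if_pmf:
  fixes c :: real
  shows "measure_pmf.expectation Q (\<lambda>v. if P v then c else 1)
    = 1 + (c - 1) * measure_pmf.prob Q {v. P v}"
proof -
  have "(\<lambda>v. if P v then c else 1) = (\<lambda>v. 1 + (c - 1) * indicator {v. P v} v)"
    by (auto simp: indicator_def)
  moreover have "integrable (measure_pmf Q) (\<lambda>v. (c - 1) * indicator {v. P v} v :: real)"
    by (intro integrable_mult_right integrable_real_indicator) (simp_all add: less_top[symmetric])
  ultimately show ?thesis using Bochner_Integration.integral_add[of "measure_pmf Q" "\<lambda>_. 1"] by simp
qed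

lemma expectation_exp_card_Pi_pmf:
  fixes Q :: "'b pmf" and A I :: "'a set" and l :: real
  assumes I: "finite I" "A \<subseteq> I"
  shows "measure_pmf.expectation (Pi_pmf I d (\<lambda>_. Q)) (\<lambda>\<omega>. exp (l * real (card {i\<in>A. P (\<omega> i)})))
    = (1 + measure_pmf.prob Q {v. P v} * (exp l - 1)) ^ card A"
proof -
  define h where "h i v = (if i \<in> A \<and> P v then exp l else 1)" for i v
  have exp_prod: "exp (l * real (card {i\<in>A. P (\<omega> i)})) = (\<Prod>i\<in>I. h i (\<omega> i))"
    for \<omega> :: "'a \<Rightarrow> 'b"
  proof -
    have "{i\<in>I. i \<in> A \<and> P (\<omega> i)} = {i\<in>A. P (\<omega> i)}" using I(2) by auto
    then have "(\<Prod>i\<in>I. h i (\<omega> i)) = exp l ^ card {i\<in>A. P (\<omega> i)}"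
      unfolding h_def using prod.inter_filter[OF I(1), of "\<lambda>_. exp l" "\<lambda>i. i \<in> A \<and> P (\<omega> i)"]
      by simp
    then show ?thesis by (simp add: exp_of_nat_mult[symmetric] mult.commute)
  qed
  have "measure_pmf.expectation (Pi_pmf I d (\<lambda>_. Q)) (\<lambda>\<omega>. exp (l * real (card {i\<in>A. P (\<omega> i)})))
      = (\<Prod>i\<in>I. measure_pmf.expectation Q (h i))"
    unfolding exp_prod by (rule expectation_prod_Pi_pmf[OF I(1)])
      (auto simp: h_def intro!: measure_pmf.integrable_const_bound[where B="max 1 (exp l)"])
  also have "\<dots> = (\<Prod>i\<in>I. if i \<in> A then 1 + measure_pmf.prob Q {v. P v} * (exp l - 1) else 1)"
    unfolding h_def by (intro prod.cong) (auto simp: expectation_if_pmf mult.commute)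
  also have "\<dots> = (1 + measure_pmf.prob Q {v. P v} * (exp l - 1)) ^ card A"
  proof -
    have "{i\<in>I. i \<in> A} = A" using I(2) by auto
    then show ?thesis
      using prod.inter_filter[OF I(1), of "\<lambda>_. 1 + measure_pmf.prob Q {v. P v} * (exp l - 1)"
          "\<lambda>i. i \<in> A"] by simp
  qed
  finally show ?thesis .
qed

lemma chernoff_upper_tail:
  fixes Q :: "'b pmf" and A I :: "'a set" and l K a :: real
  assumes I: "finite I" "A \<subseteq> I" and l: "0 \<le> l" and K: "real (card A) \<le> K"
  shows "measure_pmf.prob (Pi_pmf I d (\<lambda>_. Q)) {\<omega>. a \<le> real (card {i\<in>A. P (\<omega> i)})}
    \<le> exp (measure_pmf.prob Q {v. P v} * (exp l - 1) * K - l * a)"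
proof -
  define q where "q = measure_pmf.prob Q {v. P v}"
  define \<Omega> where "\<Omega> = Pi_pmf I d (\<lambda>_. Q)"
  define f where "f \<omega> = exp (l * real (card {i\<in>A. P (\<omega> i)}))" for \<omega> :: "'a \<Rightarrow> 'b"
  have q: "0 \<le> q" "q \<le> 1" unfolding q_def by auto
  have "measure_pmf.expectation \<Omega> f = (1 + q * (exp l - 1)) ^ card A"
    unfolding \<Omega>_def f_def q_def by (rule expectation_exp_card_Pi_pmf[OF I])
  also have "\<dots> \<le> exp (q * (exp l - 1)) ^ card A"
    using l q by (intro power_mono exp_ge_add_one_self) auto
  also have "\<dots> = exp (q * (exp l - 1) * real (card A))"
    by (simp add: exp_of_nat_mult[symmetric] mult.commute)
  also have "\<dots> \<le> exp (q * (exp l - 1) * K)"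
    using l q K by (simp add: mult_left_mono)
  finally have E: "measure_pmf.expectation \<Omega> f \<le> exp (q * (exp l - 1) * K)" .
  have "measure_pmf.prob \<Omega> {\<omega>. a \<le> real (card {i\<in>A. P (\<omega> i)})}
      \<le> measure_pmf.prob \<Omega> {\<omega>\<in>space (measure_pmf \<Omega>). exp (l * a) \<le> f \<omega>}"
    unfolding f_def using l by (intro measure_pmf.finite_measure_mono) (auto intro: mult_left_mono)
  also have "\<dots> \<le> measure_pmf.expectation \<Omega> f / exp (l * a)"
  proof (rule integral_Markov_inequality_measure)
    have "finite A" using I finite_subset by blast
    then show "integrable (measure_pmf \<Omega>) f"
      unfolding f_def using l
      by (intro measure_pmf.integrable_const_bound[where B="exp (l * real (card A))"] AE_pmfI)
        (auto intro!: mult_left_mono card_mono)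
  qed (auto simp: f_def)
  also have "\<dots> \<le> exp (q * (exp l - 1) * K) / exp (l * a)"
    using E by (intro divide_right_mono) auto
  finally show ?thesis by (simp add: exp_diff \<Omega>_def q_def)
qed

lemma covering_number_tail_bound:
  fixes Q :: "'b pmf" and t l :: real
  assumes mat: "matroid N M" and fin: "finite N" and B: "B \<in> kunion M k"
    and t: "2 \<le> t" and l: "0 \<le> l"
  shows "measure_pmf.prob (Pi_pmf N d (\<lambda>_. Q))
      {\<omega>. t \<le> real (covering_number ({i\<in>N. P (\<omega> i)} \<inter> B) M)}
    \<le> (\<Sum>J\<in>M - {{}}.
         exp (real (card J) * (measure_pmf.prob Q {v. P v} * (exp l - 1) * real k - l * (t - 1))))"
proof -
  define \<Omega> where "\<Omega> = Pi_pmf N d (\<lambda>_. Q)"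
  define q where "q = measure_pmf.prob Q {v. P v}"
  define Ev where
    "Ev J = {\<omega>. (t - 1) * real (card J) \<le> real (card {i\<in>B \<inter> indep_span M J. P (\<omega> i)})}" for J
  have BN: "B \<subseteq> N" using kunion_matroid[OF mat fin] B by (rule matroid_subset_ground)
  have "M \<subseteq> Pow N" using matroid_subset_ground[OF mat] by blast
  then have fM: "finite M" using fin by (meson finite_Pow_iff finite_subset)
  have "{\<omega>. t \<le> real (covering_number ({i\<in>N. P (\<omega> i)} \<inter> B) M)} \<subseteq> (\<Union>J\<in>M - {{}}. Ev J)"
  proof
    fix \<omega> assume "\<omega> \<in> {\<omega>. t \<le> real (covering_number ({i\<in>N. P (\<omega> i)} \<inter> B) M)}"
    then obtain J where J: "J \<in> M - {{}}"
      "(t - 1) * real (card J) \<le> real (card (({i\<in>N. P (\<omega> i)} \<inter> B) \<inter> indep_span M J))"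
      using dense_indep_span_if_covering_number_ge[OF mat fin B _ t] by blast
    have "card (({i\<in>N. P (\<omega> i)} \<inter> B) \<inter> indep_span M J) \<le> card {i\<in>B \<inter> indep_span M J. P (\<omega> i)}"
      using BN fin by (intro card_mono) (auto intro: finite_subset)
    then have "\<omega> \<in> Ev J" using J(2) unfolding Ev_def by simp
    then show "\<omega> \<in> (\<Union>J\<in>M - {{}}. Ev J)" using J(1) by blast
  qed
  then have "measure_pmf.prob \<Omega> {\<omega>. t \<le> real (covering_number ({i\<in>N. P (\<omega> i)} \<inter> B) M)}
      \<le> measure_pmf.prob \<Omega> (\<Union>J\<in>M - {{}}. Ev J)"
    by (rule measure_pmf.finite_measure_mono) simp
  also have "\<dots> \<le> (\<Sum>J\<in>M - {{}}. measure_pmf.prob \<Omega> (Ev J))"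
    by (rule measure_pmf.finite_measure_subadditive_finite) (simp_all add: fM)
  also have "\<dots> \<le> (\<Sum>J\<in>M - {{}}. exp (real (card J) * (q * (exp l - 1) * real k - l * (t - 1))))"
  proof (rule sum_mono)
    fix J assume J: "J \<in> M - {{}}"
    have "real (card (B \<inter> indep_span M J)) \<le> real k * real (card J)"
      using card_inter_indep_span_kunion[OF mat B] J by (simp flip: of_nat_mult)
    then have "measure_pmf.prob \<Omega> (Ev J)
        \<le> exp (q * (exp l - 1) * (real k * real (card J)) - l * ((t - 1) * real (card J)))"
      unfolding \<Omega>_def Ev_def q_def using BN fin
      by (intro chernoff_upper_tail l) (auto intro: finite_subset)
    also have "\<dots> = exp (real (card J) * (q * (exp l - 1) * real k - l * (t - 1)))"
      by (simp add: algebra_simps)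
    finally show "measure_pmf.prob \<Omega> (Ev J)
        \<le> exp (real (card J) * (q * (exp l - 1) * real k - l * (t - 1)))" .
  qed
  finally show ?thesis unfolding \<Omega>_def q_def .
qed

lemma sum_power_card_Pow:
  fixes x :: "'b :: comm_semiring_1"
  assumes "finite A"
  shows "(\<Sum>J\<in>Pow A. x ^ card J) = (1 + x) ^ card A"
  using prod_add[OF assms, of "\<lambda>_. x" "\<lambda>_. 1"] by (simp add: add.commute)

lemma sum_power_card_nonempty_le:
  fixes x :: real
  assumes A: "finite A" and F: "F \<subseteq> Pow A - {{}}" and x: "0 \<le> x"
  shows "(\<Sum>J\<in>F. x ^ card J) \<le> (1 + x) ^ card A - 1"
proof -
  have "(\<Sum>J\<in>F. x ^ card J) \<le> (\<Sum>J\<in>Pow A - {{}}. x ^ card J)"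
    using A F x by (intro sum_mono2) auto
  also have "\<dots> = (\<Sum>J\<in>Pow A. x ^ card J) - 1"
    using A by (subst sum_diff1) auto
  finally show ?thesis using sum_power_card_Pow[OF A, of x] by simp
qed

lemma one_plus_inverse_power_bound:
  assumes n: "2 \<le> n"
  shows "(1 + 1 / real n ^ 6) ^ n - 1 \<le> 1 / real n ^ 3"
proof -
  define y where "y = 1 / real n ^ 5"
  have y: "0 \<le> y" "y \<le> 1" unfolding y_def using n by simp_all
  have "(1 + 1 / real n ^ 6) ^ n \<le> exp (1 / real n ^ 6) ^ n"
    by (intro power_mono) (auto simp: add.commute)
  also have "\<dots> = exp y"
    unfolding y_def using n by (simp add: exp_of_nat_mult[symmetric] eval_nat_numeral field_simps)
  also have "\<dots> \<le> 1 + y + y\<^sup>2" by (rule exp_bound) (use y in auto)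
  also have "\<dots> \<le> 1 + 2 * y" using y by (simp add: power2_eq_square mult_left_le)
  finally have "(1 + 1 / real n ^ 6) ^ n - 1 \<le> 2 * y" by simp
  also have "2 * y \<le> 1 / real n ^ 3"
  proof -
    have "(2::real) ^ 2 \<le> real n ^ 2" using n by (intro power_mono) auto
    then have "2 * real n ^ 3 \<le> real n ^ 2 * real n ^ 3" by (intro mult_right_mono) auto
    then show ?thesis unfolding y_def using n by (simp add: field_simps eval_nat_numeral)
  qed
  finally show ?thesis .
qed

lemma sum_exp_card_le_inverse_cube:
  assumes n: "2 \<le> n" and F: "F \<subseteq> Pow {1..n} - {{}}" and x: "x \<le> - 6 * ln (real n)"
  shows "(\<Sum>J\<in>F. exp (real (card J) * x)) \<le> 1 / real n ^ 3"
proof -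
  have "exp (6 * ln (real n)) = real n ^ 6"
    using n exp_of_nat_mult[of 6 "ln (real n)"] by simp
  then have exp_ln: "exp (- 6 * ln (real n)) = 1 / real n ^ 6"
    by (simp add: exp_minus inverse_eq_divide)
  have "(\<Sum>J\<in>F. exp (real (card J) * x)) \<le> (\<Sum>J\<in>F. (1 / real n ^ 6) ^ card J)"
  proof (rule sum_mono)
    fix J
    have "exp (real (card J) * x) \<le> exp (real (card J) * (- 6 * ln (real n)))"
      using x by (intro iffD2[OF exp_le_cancel_iff] mult_left_mono) auto
    also have "\<dots> = (1 / real n ^ 6) ^ card J" unfolding exp_of_nat_mult by (simp only: exp_ln)
    finally show "exp (real (card J) * x) \<le> (1 / real n ^ 6) ^ card J" .
  qed
  also have "\<dots> \<le> (1 + 1 / real n ^ 6) ^ n - 1"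
    using sum_power_card_nonempty_le[OF _ F, of "1 / real n ^ 6"] by simp
  also have "\<dots> \<le> 1 / real n ^ 3" by (rule one_plus_inverse_power_bound[OF n])
  finally show ?thesis .
qed

lemma eps_sq_le:
  assumes C: "0 < C" and n: "2 \<le> n" and k: "0 < k" and p: "eps C n k \<le> p"
  shows "(eps C n (p * k))\<^sup>2 \<le> eps C n k"
proof -
  define L where "L = ln (real n)"
  have L: "0 < L" unfolding L_def using n by simp
  have e: "0 < eps C n k" unfolding eps_def L_def[symmetric] using C L k by simp
  then have "0 < p" using p by simp
  have "(eps C n (p * k))\<^sup>2 = C\<^sup>2 * L / (p * k)"
    unfolding eps_def L_def[symmetric] using L \<open>0 < p\<close> k by (simp add: power_mult_distrib)
  also have "\<dots> \<le> C\<^sup>2 * L / (eps C n k * k)"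
    using e p k L by (intro divide_left_mono mult_right_mono) auto
  also have "\<dots> = (eps C n k)\<^sup>2 / eps C n k"
    unfolding eps_def L_def[symmetric] using L k by (simp add: power_mult_distrib)
  also have "\<dots> = eps C n k" using e by (simp add: power2_eq_square)
  finally show ?thesis .
qed

lemma eps_tail_exponent:
  assumes C: "10 \<le> C" and n: "2 \<le> n" and k: "1 \<le> k" and p: "eps C n (real k) \<le> p" "p \<le> 1/2"
  defines "\<delta> \<equiv> eps C n (p * real k)"
  shows "0 \<le> \<delta>" "2 \<le> (1 + \<delta>) * p * real k"
    "p * (exp (\<delta> / 2) - 1) * real k - \<delta> / 2 * ((1 + \<delta>) * p * real k - 1) \<le> - 6 * ln (real n)"
proof -
  define L where "L = ln (real n)"
  define \<mu> where "\<mu> = p * real k"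
  have "ln 2 \<le> L" unfolding L_def using n by simp
  then have L: "2/3 \<le> L" using ln2_ge_two_thirds by simp
  have "0 < eps C n (real k)" unfolding eps_def using C n k by simp
  then have \<mu>: "0 < \<mu>" unfolding \<mu>_def using p k by simp
  have \<delta>_sq: "\<mu> * \<delta>\<^sup>2 = C\<^sup>2 * L"
    unfolding \<delta>_def eps_def \<mu>_def[symmetric] L_def[symmetric] using \<mu> L
    by (simp add: power_mult_distrib)
  show \<delta>: "0 \<le> \<delta>" unfolding \<delta>_def eps_def using C L \<mu> by (simp add: \<mu>_def L_def)
  have "\<delta>\<^sup>2 \<le> 1/2" using eps_sq_le[of C n "real k" p] C n k p unfolding \<delta>_def by simp
  then have \<delta>1: "\<delta> \<le> 1" using power2_le_imp_le[of \<delta> 1] by simp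
  have "C\<^sup>2 * L \<le> \<mu> / 2" using mult_left_mono[OF \<open>\<delta>\<^sup>2 \<le> 1/2\<close>, of \<mu>] \<delta>_sq \<mu> by simp
  moreover have "10 * 10 \<le> C * C" using C by (intro mult_mono) auto
  then have C100: "100 * L \<le> C\<^sup>2 * L"
    using L by (intro mult_right_mono) (auto simp: power2_eq_square)
  ultimately have "200 * L \<le> \<mu>" by simp
  moreover have "\<mu> \<le> (1 + \<delta>) * \<mu>" using \<delta> \<mu> by simp
  moreover have t: "(1 + \<delta>) * p * real k = (1 + \<delta>) * \<mu>" unfolding \<mu>_def by simp
  ultimately show "2 \<le> (1 + \<delta>) * p * real k" using L by linarith
  have "exp (\<delta> / 2) - 1 \<le> \<delta> / 2 + (\<delta> / 2)\<^sup>2" using exp_bound[of "\<delta> / 2"] \<delta> \<delta>1 by simp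
  then have "\<mu> * (exp (\<delta> / 2) - 1) \<le> \<mu> * (\<delta> / 2 + (\<delta> / 2)\<^sup>2)" using \<mu> by (intro mult_left_mono) auto
  moreover have "p * (exp (\<delta> / 2) - 1) * real k = \<mu> * (exp (\<delta> / 2) - 1)" unfolding \<mu>_def by simp
  ultimately have "p * (exp (\<delta> / 2) - 1) * real k - \<delta> / 2 * ((1 + \<delta>) * p * real k - 1)
      \<le> \<mu> * (\<delta> / 2 + (\<delta> / 2)\<^sup>2) - \<delta> / 2 * ((1 + \<delta>) * \<mu> - 1)"
    unfolding t by linarith
  also have "\<dots> = - (\<mu> * \<delta>\<^sup>2) / 4 + \<delta> / 2" by (simp add: algebra_simps power2_eq_square)
  also have "\<dots> \<le> - 6 * L" using \<delta>_sq C100 L \<delta>1 by linarith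
  finally show "p * (exp (\<delta> / 2) - 1) * real k - \<delta> / 2 * ((1 + \<delta>) * p * real k - 1)
      \<le> - 6 * ln (real n)"
    unfolding L_def .
qed

theorem lemma2:
  "\<exists>C0::real. \<forall>C\<ge>C0. \<forall>(n::nat) (k::nat) (M::nat set set) (w::nat \<Rightarrow> real) (p::real).
     n \<ge> 1 \<longrightarrow> matroid {1..n} M \<longrightarrow>
     (\<forall>i\<in>{1..n}. w i \<ge> 0) \<longrightarrow>
     (\<forall>i\<in>{1..n}. \<forall>j\<in>{1..n}. i < j \<longrightarrow> w i > w j) \<longrightarrow>
     k \<ge> 1 \<longrightarrow> 160\<^sup>2 * ln (real n) \<le> real k \<longrightarrow> k \<le> n \<longrightarrow>
     (\<exists>m::nat. m \<ge> 1 \<and> ln (1 / eps C n (real k)) - 2 = real m) \<longrightarrow>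
     eps C n (real k) \<le> p \<longrightarrow> p \<le> 1/2 \<longrightarrow>
     measure_pmf.prob
       (Pi_pmf {1..n} (False, False)
          (\<lambda>_. pair_pmf (bernoulli_pmf (2 * p)) (bernoulli_pmf (1/2))))
       {\<omega>. real (covering_number
               ({i\<in>{1..n}. fst (\<omega> i) \<and> snd (\<omega> i)} \<inter> OPT w (kunion M k)) M)
             \<ge> (1 + eps C n (p * real k)) * p * real k}
     \<le> 1 / real n ^ 3"
proof (intro exI[of _ 10] allI impI)
  fix C :: real and n k :: nat and M :: "nat set set" and w :: "nat \<Rightarrow> real" and p :: real
  assume C: "10 \<le> C" and n: "1 \<le> n" and mat: "matroid {1..n} M"
    and nonneg: "\<forall>i\<in>{1..n}. 0 \<le> w i" and decr: "\<forall>i\<in>{1..n}. \<forall>j\<in>{1..n}. i < j \<longrightarrow> w j < w i"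
    and k: "1 \<le> k" and "160\<^sup>2 * ln (real n) \<le> real k" "k \<le> n"
    and "\<exists>m::nat. 1 \<le> m \<and> ln (1 / eps C n (real k)) - 2 = real m"
    and p: "eps C n (real k) \<le> p" "p \<le> 1/2"
  let ?Q = "pair_pmf (bernoulli_pmf (2 * p)) (bernoulli_pmf (1/2))"
  let ?\<Omega> = "Pi_pmf {1..n} (False, False) (\<lambda>_. ?Q)"
  let ?E = "{\<omega>. (1 + eps C n (p * real k)) * p * real k \<le>
    real (covering_number ({i\<in>{1..n}. fst (\<omega> i) \<and> snd (\<omega> i)} \<inter> OPT w (kunion M k)) M)}"
  show "measure_pmf.prob ?\<Omega> ?E \<le> 1 / real n ^ 3"
  proof (cases "n = 1")
    case True
    then show ?thesis by simp
  next
    case False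
    then have n2: "2 \<le> n" using n by simp
    define \<delta> where "\<delta> = eps C n (p * real k)"
    define x where "x = p * (exp (\<delta> / 2) - 1) * real k - \<delta> / 2 * ((1 + \<delta>) * p * real k - 1)"
    note param = eps_tail_exponent[OF C n2 k p, folded \<delta>_def, folded x_def]
    have "0 \<le> eps C n (real k)" unfolding eps_def using C ln_ge_zero[of "real n"] n by simp
    then have "0 \<le> p" using p(1) by linarith
    have "strict_antimono_on {1..n} w" by (rule monotone_onI) (use decr in auto)
    then have "inj_on w {1..n}" by (simp add: strict_antimono_iff_antimono)
    then have B: "OPT w (kunion M k) \<in> kunion M k"
      using OPT_mem[OF kunion_matroid[OF mat]] nonneg by simp
    have "measure_pmf.prob ?\<Omega> ?E \<le> (\<Sum>J\<in>M - {{}}. exp (real (card J) * x))"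
      using covering_number_tail_bound[OF mat _ B param(2), where l = "\<delta> / 2"
          and P = "\<lambda>v. fst v \<and> snd v" and d = "(False, False)" and Q = ?Q]
        param(1) prob_pair_bernoulli_both[OF \<open>0 \<le> p\<close> p(2)]
      by (simp add: x_def \<delta>_def)
    also have "\<dots> \<le> 1 / real n ^ 3"
      by (rule sum_exp_card_le_inverse_cube[OF n2 _ param(3)])
        (use matroid_subset_ground[OF mat] in fastforce)
    finally show ?thesis .
  qed
qed

end
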